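(* Let $q$ be a prime power, $3\le n\le q$, and let $\boldsymbol\alpha=(\alpha_1,\dots,\alpha_n)$ consist of pairwise distinct elements of $\mathbb F_q$. The Reed–Solomon code $\mathrm{RS}_{\boldsymbol\alpha}(n,2)$ has insdel distance $2n-4$ if and only if the following holds: for every $\mathbf i=(i_1,i_2,i_3),\mathbf j=(j_1,j_2,j_3)\in S_3(n)$ with $d_H(\mathbf i,\mathbf j)\ge 2$, there is no pair $(a,b)\in\mathbb F_q^*\times\mathbb F_q$ with $a\alpha_{i_\ell}+b=\alpha_{j_\ell}$ for all $\ell=1,2,3$.
   Context: $\mathrm{RS}_{\boldsymbol\alpha}(n,k)=\{(f(\alpha_1),\dots,f(\alpha_n)): f\in\mathbb F_q[x],\ \deg f<k\}$. $S_3(n)=\{(i_1,i_2,i_3)\in\{1,\dots,n\}^3: i_1<i_2<i_3\}$, and $d_H(\mathbf i,\mathbf j)$ is the number of coordinates in which $\mathbf i$ and $\mathbf j$ differ. For $\mathbf u,\mathbf v\in\mathbb F_q^n$, the insdel distance $d_I(\mathbf u,\mathbf v)$ is the minimum number of insertions and deletions transforming $\mathbf u$ into $\mathbf v$; equivalently $2n-2\ell_{\rm LCS}(\mathbf u,\mathbf v)$ with $\ell_{\rm LCS}$ the length of a longest common subsequence. The insdel distance of a code is the minimum over distinct codewords. *)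

theory Defs
  imports "HOL-Computational_Algebra.Polynomial" "HOL-Library.Sublist"
begin

(* Reed-Solomon code RS_alpha(n,k), evaluation points alpha 1, ..., alpha n (1-based),
   codewords represented as lists of length n *)
definition RS_code :: "(nat \<Rightarrow> 'a::field) \<Rightarrow> nat \<Rightarrow> nat \<Rightarrow> 'a list set" where
  "RS_code \<alpha> n k = {map (\<lambda>i. poly f (\<alpha> i)) [1..<n+1] | f. degree f < k}"

definition lcs_len :: "'a list \<Rightarrow> 'a list \<Rightarrow> nat" where
  "lcs_len u v = Max {length w | w. subseq w u \<and> subseq w v}"

definition insdel_dist :: "'a list \<Rightarrow> 'a list \<Rightarrow> nat" where
  "insdel_dist u v = length u + length v - 2 * lcs_len u v"

definition code_insdel_dist :: "'a list set \<Rightarrow> nat" where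
  "code_insdel_dist C = Min {insdel_dist u v | u v. u \<in> C \<and> v \<in> C \<and> u \<noteq> v}"

definition S3 :: "nat \<Rightarrow> (nat \<times> nat \<times> nat) set" where
  "S3 n = {(i1, i2, i3). 1 \<le> i1 \<and> i1 < i2 \<and> i2 < i3 \<and> i3 \<le> n}"

definition dH3 :: "nat \<times> nat \<times> nat \<Rightarrow> nat \<times> nat \<times> nat \<Rightarrow> nat" where
  "dH3 i j = (case i of (i1, i2, i3) \<Rightarrow> case j of (j1, j2, j3) \<Rightarrow>
     (if i1 \<noteq> j1 then 1 else 0) + (if i2 \<noteq> j2 then 1 else 0) + (if i3 \<noteq> j3 then 1 else 0))"

end

theory Submission
  imports Defs
begin

text \<open>Every codeword of \<open>RS(n,2)\<close> is an affine image \<open>(c \<alpha>\<^sub>i + d)\<^sub>i\<close> of the evaluation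
  vector, and all codewords have length \<open>n\<close>, so the insdel distance is \<open>2n - 2\<ell>\<close> with \<open>\<ell>\<close> the
  largest LCS of two distinct codewords. A common subsequence of length 2 always exists (the
  affine map sending \<open>\<alpha>\<^sub>1, \<alpha>\<^sub>2\<close> to \<open>\<alpha>\<^sub>2, \<alpha>\<^sub>3\<close>), so the distance is \<open>2n - 4\<close> iff no two distinct
  codewords share a common subsequence of length 3. If \<open>c\<^sub>1\<alpha> + d\<^sub>1\<close> and \<open>c\<^sub>2\<alpha> + d\<^sub>2\<close> agree at
  positions \<open>i\<close> and \<open>j\<close> respectively, then \<open>a = c\<^sub>1/c\<^sub>2\<close>, \<open>b = (d\<^sub>1 - d\<^sub>2)/c\<^sub>2\<close> maps \<open>\<alpha>\<^sub>i\<close> to \<open>\<alpha>\<^sub>j\<close>;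
  since two affine maps agreeing at two distinct points coincide, the codewords are distinct
  exactly when \<open>i\<close> and \<open>j\<close> differ in at least two places.\<close>

subsection \<open>Longest common subsequences and the insdel distance of a code\<close>

lemma lcs_len_ge_iff:
  "k \<le> lcs_len u v \<longleftrightarrow> (\<exists>w. length w = k \<and> subseq w u \<and> subseq w v)"
proof -
  define L where "L = {length w | w. subseq w u \<and> subseq w v}"
  have "L \<subseteq> {..length u}"
    unfolding L_def using list_emb_length by fastforce
  then have "finite L" by (rule finite_subset) simp
  moreover have "L \<noteq> {}" unfolding L_def by blast
  ultimately have "k \<le> lcs_len u v \<longleftrightarrow> (\<exists>l\<in>L. k \<le> l)"
    unfolding lcs_len_def L_def[symmetric] by (rule Max_ge_iff)
  also have "\<dots> \<longleftrightarrow> (\<exists>w. length w = k \<and> subseq w u \<and> subseq w v)"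
  proof
    assume "\<exists>l\<in>L. k \<le> l"
    then obtain w where "k \<le> length w" "subseq w u" "subseq w v" unfolding L_def by blast
    moreover have "subseq (take k w) w"
      using subseq_append'[of "take k w" "[]" "drop k w"] by simp
    ultimately show "\<exists>w. length w = k \<and> subseq w u \<and> subseq w v"
      by (intro exI[of _ "take k w"]) (auto intro: subseq_order.trans)
  qed (auto simp: L_def)
  finally show ?thesis .
qed

lemma lcs_len_le_length: "lcs_len u v \<le> length u"
proof -
  obtain w where "length w = lcs_len u v" "subseq w u"
    using lcs_len_ge_iff[of "lcs_len u v" u v] by auto
  then show ?thesis by (metis list_emb_length)
qed

lemma code_insdel_dist_ge_iff:
  assumes "finite C" and "u \<in> C" "v \<in> C" "u \<noteq> v"
  shows "k \<le> code_insdel_dist C \<longleftrightarrow> (\<forall>u\<in>C. \<forall>v\<in>C. u \<noteq> v \<longrightarrow> k \<le> insdel_dist u v)"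
proof -
  define D where "D = {insdel_dist u v | u v. u \<in> C \<and> v \<in> C \<and> u \<noteq> v}"
  have "D \<subseteq> {insdel_dist u v | u v. u \<in> C \<and> v \<in> C}" unfolding D_def by blast
  moreover have "finite {insdel_dist u v | u v. u \<in> C \<and> v \<in> C}"
    using assms(1) by (intro finite_image_set2) simp_all
  ultimately have "finite D" by (rule finite_subset)
  moreover have "D \<noteq> {}" unfolding D_def using assms(2-4) by blast
  ultimately have "k \<le> Min D \<longleftrightarrow> (\<forall>x\<in>D. k \<le> x)" by (rule Min_ge_iff)
  then show ?thesis unfolding code_insdel_dist_def D_def[symmetric] by (auto simp: D_def)
qed

lemma code_insdel_dist_le:
  assumes "finite C" and "u \<in> C" "v \<in> C" "u \<noteq> v"
  shows "code_insdel_dist C \<le> insdel_dist u v"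
proof -
  have "\<forall>u\<in>C. \<forall>v\<in>C. u \<noteq> v \<longrightarrow> code_insdel_dist C \<le> insdel_dist u v"
    using code_insdel_dist_ge_iff[OF assms, of "code_insdel_dist C"] by simp
  then show ?thesis using assms(2-4) by simp
qed

lemma insdel_dist_ge_iff_lcs_len_le_2:
  assumes "length u = n" "length v = n"
  shows "2 * n - 4 \<le> insdel_dist u v \<longleftrightarrow> \<not> 3 \<le> lcs_len u v"
  using assms lcs_len_le_length[of u v] unfolding insdel_dist_def by arith

lemma code_insdel_dist_eq_2n_minus_4_iff:
  assumes "finite C" and len: "\<forall>w\<in>C. length w = n"
    and uv: "u \<in> C" "v \<in> C" "u \<noteq> v" "2 \<le> lcs_len u v"
  shows "code_insdel_dist C = 2 * n - 4 \<longleftrightarrow>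
    \<not> (\<exists>u\<in>C. \<exists>v\<in>C. u \<noteq> v \<and> (\<exists>w. length w = 3 \<and> subseq w u \<and> subseq w v))"
proof -
  have "code_insdel_dist C \<le> 2 * n - 4"
    using code_insdel_dist_le[OF assms(1) uv(1-3)] uv len by (simp add: insdel_dist_def)
  then have "code_insdel_dist C = 2 * n - 4 \<longleftrightarrow> 2 * n - 4 \<le> code_insdel_dist C"
    by auto
  also have "\<dots> \<longleftrightarrow> (\<forall>u\<in>C. \<forall>v\<in>C. u \<noteq> v \<longrightarrow> 2 * n - 4 \<le> insdel_dist u v)"
    by (rule code_insdel_dist_ge_iff[OF assms(1) uv(1-3)])
  also have "\<dots> \<longleftrightarrow> (\<forall>u\<in>C. \<forall>v\<in>C. u \<noteq> v \<longrightarrow> \<not> 3 \<le> lcs_len u v)"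
    using len insdel_dist_ge_iff_lcs_len_le_2 by blast
  finally show ?thesis unfolding lcs_len_ge_iff by blast
qed

lemma subseq_Cons_map_upt_iff:
  "subseq (x # w) (map h [l..<m]) \<longleftrightarrow>
     (\<exists>i. l \<le> i \<and> i < m \<and> x = h i \<and> subseq w (map h [Suc i..<m]))"
proof (induction "m - l" arbitrary: l)
  case 0 then show ?case by simp
next
  case (Suc k)
  then have "l < m" by simp
  have "subseq (x # w) (h l # ys) \<longleftrightarrow> (x = h l \<and> subseq w ys) \<or> subseq (x # w) ys" for ys
    by (auto dest: subseq_Cons')
  moreover have "map h [l..<m] = h l # map h [Suc l..<m]"
    using \<open>l < m\<close> by (simp add: upt_conv_Cons)
  moreover have "(\<exists>i. l \<le> i \<and> P i) \<longleftrightarrow> P l \<or> (\<exists>i. Suc l \<le> i \<and> P i)" for P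
    using le_eq_less_or_eq Suc_le_eq by auto
  ultimately show ?case
    using Suc.hyps(1)[of "Suc l"] Suc.hyps(2) \<open>l < m\<close> by (simp add: Suc_diff_Suc)
qed

lemma subseq_Cons_map_uptI:
  "l \<le> i \<Longrightarrow> i < m \<Longrightarrow> subseq w (map h [Suc i..<m]) \<Longrightarrow> subseq (h i # w) (map h [l..<m])"
  unfolding subseq_Cons_map_upt_iff by blast

lemma subseq3_map_upt_iff:
  "subseq [x, y, z] (map h [1..<n+1]) \<longleftrightarrow>
     (\<exists>i1 i2 i3. (i1, i2, i3) \<in> S3 n \<and> x = h i1 \<and> y = h i2 \<and> z = h i3)"
  (is "?L \<longleftrightarrow> ?R")
proof
  assume ?L
  then obtain i1 i2 i3 where "1 \<le> i1" "i1 < i2" "i2 < i3" "i3 \<le> n"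
    and xyz: "x = h i1" "y = h i2" "z = h i3"
    by (auto simp: subseq_Cons_map_upt_iff Suc_le_eq simp del: upt_Suc)
  then have "(i1, i2, i3) \<in> S3 n" by (simp add: S3_def)
  with xyz show ?R by blast
next
  assume ?R
  then obtain i1 i2 i3 where "1 \<le> i1" "i1 < i2" "i2 < i3" "i3 \<le> n"
    and "x = h i1" "y = h i2" "z = h i3"
    unfolding S3_def by auto
  then show ?L by (auto simp del: upt_Suc intro!: subseq_Cons_map_uptI)
qed

subsection \<open>Codewords of \<open>RS(n,2)\<close>\<close>

definition affine_word :: "(nat \<Rightarrow> 'a::field) \<Rightarrow> nat \<Rightarrow> 'a \<Rightarrow> 'a \<Rightarrow> 'a list" where
  "affine_word \<alpha> n c d = map (\<lambda>i. c * \<alpha> i + d) [1..<n+1]"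

lemma length_affine_word [simp]: "length (affine_word \<alpha> n c d) = n"
  by (simp add: affine_word_def)

lemma affine_word_eq_iff:
  "affine_word \<alpha> n c d = affine_word \<alpha> n c' d' \<longleftrightarrow> (\<forall>k\<in>{1..n}. c * \<alpha> k + d = c' * \<alpha> k + d')"
  by (auto simp: affine_word_def simp del: upt_Suc)

lemma subseq3_affine_word_iff:
  "subseq [x, y, z] (affine_word \<alpha> n c d) \<longleftrightarrow>
     (\<exists>i1 i2 i3. (i1, i2, i3) \<in> S3 n \<and>
        x = c * \<alpha> i1 + d \<and> y = c * \<alpha> i2 + d \<and> z = c * \<alpha> i3 + d)"
  unfolding affine_word_def by (rule subseq3_map_upt_iff[where h = "\<lambda>i. c * \<alpha> i + d"])

lemma poly_degree_less_2:
  assumes "degree (f :: 'a::field poly) < 2"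
  shows "poly f x = coeff f 1 * x + coeff f 0"
proof -
  have "f = (\<Sum>i\<le>1. monom (coeff f i) i)"
    using assms poly_as_sum_of_monoms'[of f 1] by simp
  then have "poly f x = poly (\<Sum>i\<le>1. monom (coeff f i) i) x" by simp
  then show ?thesis by (simp add: poly_sum poly_monom)
qed

lemma RS_code_2: "RS_code \<alpha> n 2 = range (\<lambda>(c, d). affine_word \<alpha> n c d)"
proof -
  have "affine_word \<alpha> n c d \<in> RS_code \<alpha> n 2" for c d
    unfolding RS_code_def affine_word_def
    by (rule CollectI, rule exI[of _ "[:d, c:]"]) (auto simp: algebra_simps)
  moreover have "map (\<lambda>i. poly f (\<alpha> i)) [1..<n+1] = affine_word \<alpha> n (coeff f 1) (coeff f 0)"
    if "degree f < 2" for f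
    using that by (simp add: affine_word_def poly_degree_less_2)
  ultimately show ?thesis unfolding RS_code_def by fastforce
qed

lemma affine_eq_if_agree2:
  fixes p p' c d c' d' :: "'a::field"
  assumes "p \<noteq> p'" "c * p + d = c' * p + d'" "c * p' + d = c' * p' + d'"
  shows "c = c' \<and> d = d'"
proof -
  have "(c * p + d) - (c * p' + d) = (c' * p + d') - (c' * p' + d')" using assms(2,3) by simp
  then have "(c - c') * (p - p') = 0" by (simp add: algebra_simps)
  then have "c = c'" using assms(1) by simp
  then show ?thesis using assms(2) by simp
qed

lemma affine_eq_solve:
  fixes c1 d1 c2 d2 p q :: "'a::field"
  assumes "c2 \<noteq> 0" "c1 * p + d1 = c2 * q + d2"
  shows "c1 / c2 * p + (d1 - d2) / c2 = q"
proof -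
  have "c2 * (c1 / c2 * p + (d1 - d2) / c2) = c1 * p + d1 - d2"
    using assms(1) by (simp add: distrib_left)
  also have "\<dots> = c2 * q" using assms(2) by simp
  finally show ?thesis using assms(1) by simp
qed

subsection \<open>Common subsequences of length 3\<close>

lemma affine_triple_if_common_subseq3:
  assumes inj: "inj_on \<alpha> {1..n}"
    and ne: "affine_word \<alpha> n c1 d1 \<noteq> affine_word \<alpha> n c2 d2"
    and sub1: "subseq [x, y, z] (affine_word \<alpha> n c1 d1)"
    and sub2: "subseq [x, y, z] (affine_word \<alpha> n c2 d2)"
  shows "\<exists>i\<in>S3 n. \<exists>j\<in>S3 n. 2 \<le> dH3 i j \<and> (\<exists>a b. a \<noteq> 0 \<and>
           a * \<alpha> (fst i) + b = \<alpha> (fst j) \<and>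
           a * \<alpha> (fst (snd i)) + b = \<alpha> (fst (snd j)) \<and>
           a * \<alpha> (snd (snd i)) + b = \<alpha> (snd (snd j)))"
proof -
  obtain i1 i2 i3 where i: "(i1, i2, i3) \<in> S3 n"
    and xi: "x = c1 * \<alpha> i1 + d1" "y = c1 * \<alpha> i2 + d1" "z = c1 * \<alpha> i3 + d1"
    using sub1 by (auto simp: subseq3_affine_word_iff)
  obtain j1 j2 j3 where j: "(j1, j2, j3) \<in> S3 n"
    and xj: "x = c2 * \<alpha> j1 + d2" "y = c2 * \<alpha> j2 + d2" "z = c2 * \<alpha> j3 + d2"
    using sub2 by (auto simp: subseq3_affine_word_iff)
  have \<alpha>i: "\<alpha> i1 \<noteq> \<alpha> i2" "\<alpha> i1 \<noteq> \<alpha> i3" "\<alpha> i2 \<noteq> \<alpha> i3"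
    using i inj by (auto simp: S3_def dest: inj_onD)
  have \<alpha>j: "\<alpha> j1 \<noteq> \<alpha> j2"
    using j inj by (auto simp: S3_def dest: inj_onD)
  have distinct: "\<not> (c1 = c2 \<and> d1 = d2)" using ne by auto
  have "c1 \<noteq> 0"
    using affine_eq_if_agree2[OF \<alpha>j, of c2 d2 0 d1] xi xj distinct by auto
  have "c2 \<noteq> 0"
    using affine_eq_if_agree2[OF \<alpha>i(1), of c1 d1 0 d2] xi xj distinct by auto
  define a where "a = c1 / c2"
  define b where "b = (d1 - d2) / c2"
  have ab: "a * \<alpha> k + b = \<alpha> l" if "c1 * \<alpha> k + d1 = c2 * \<alpha> l + d2" for k l
    using affine_eq_solve[OF \<open>c2 \<noteq> 0\<close> that] by (simp add: a_def b_def)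
  have "2 \<le> dH3 (i1, i2, i3) (j1, j2, j3)"
  proof (rule ccontr)
    assume "\<not> ?thesis"
    then have "(i1 = j1 \<and> i2 = j2) \<or> (i1 = j1 \<and> i3 = j3) \<or> (i2 = j2 \<and> i3 = j3)"
      by (simp add: dH3_def split: if_splits)
    then show False
      using affine_eq_if_agree2[OF \<alpha>i(1)] affine_eq_if_agree2[OF \<alpha>i(2)]
        affine_eq_if_agree2[OF \<alpha>i(3)] xi xj distinct by metis
  qed
  moreover have "a \<noteq> 0" using \<open>c1 \<noteq> 0\<close> \<open>c2 \<noteq> 0\<close> by (simp add: a_def)
  moreover have "a * \<alpha> i1 + b = \<alpha> j1" "a * \<alpha> i2 + b = \<alpha> j2" "a * \<alpha> i3 + b = \<alpha> j3"
    using ab xi xj by simp_all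
  ultimately show ?thesis using i j by fastforce
qed

lemma common_subseq3_if_affine_triple:
  assumes inj: "inj_on \<alpha> {1..n}"
    and i: "(i1, i2, i3) \<in> S3 n" and j: "(j1, j2, j3) \<in> S3 n"
    and dH: "2 \<le> dH3 (i1, i2, i3) (j1, j2, j3)"
    and ab: "a * \<alpha> i1 + b = \<alpha> j1" "a * \<alpha> i2 + b = \<alpha> j2" "a * \<alpha> i3 + b = \<alpha> j3"
  shows "affine_word \<alpha> n a b \<noteq> affine_word \<alpha> n 1 0 \<and>
    subseq [\<alpha> j1, \<alpha> j2, \<alpha> j3] (affine_word \<alpha> n a b) \<and>
    subseq [\<alpha> j1, \<alpha> j2, \<alpha> j3] (affine_word \<alpha> n 1 0)"
proof (intro conjI)
  show "affine_word \<alpha> n a b \<noteq> affine_word \<alpha> n 1 0"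
  proof
    assume "affine_word \<alpha> n a b = affine_word \<alpha> n 1 0"
    then have "\<alpha> i1 = \<alpha> j1" "\<alpha> i2 = \<alpha> j2" "\<alpha> i3 = \<alpha> j3"
      using i ab by (auto simp: affine_word_eq_iff S3_def)
    then have "i1 = j1" "i2 = j2" "i3 = j3"
      using i j inj by (auto simp: S3_def dest: inj_onD)
    then show False using dH by (simp add: dH3_def)
  qed
qed (use i j ab in \<open>force simp: subseq3_affine_word_iff\<close>)+

lemma RS2_common_subseq3_iff:
  assumes "inj_on \<alpha> {1..n}"
  shows "(\<exists>u\<in>RS_code \<alpha> n 2. \<exists>v\<in>RS_code \<alpha> n 2. u \<noteq> v \<and>
            (\<exists>w. length w = 3 \<and> subseq w u \<and> subseq w v)) \<longleftrightarrow>
    (\<exists>i\<in>S3 n. \<exists>j\<in>S3 n. 2 \<le> dH3 i j \<and> (\<exists>a b. a \<noteq> 0 \<and>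
       a * \<alpha> (fst i) + b = \<alpha> (fst j) \<and>
       a * \<alpha> (fst (snd i)) + b = \<alpha> (fst (snd j)) \<and>
       a * \<alpha> (snd (snd i)) + b = \<alpha> (snd (snd j))))"
proof
  have length_3: "length w = 3 \<longleftrightarrow> (\<exists>x y z. w = [x, y, z])" for w :: "'a list"
    by (auto simp: numeral_3_eq_3 length_Suc_conv)
  assume "\<exists>u\<in>RS_code \<alpha> n 2. \<exists>v\<in>RS_code \<alpha> n 2. u \<noteq> v \<and>
            (\<exists>w. length w = 3 \<and> subseq w u \<and> subseq w v)"
  then show "\<exists>i\<in>S3 n. \<exists>j\<in>S3 n. 2 \<le> dH3 i j \<and> (\<exists>a b. a \<noteq> 0 \<and>
       a * \<alpha> (fst i) + b = \<alpha> (fst j) \<and>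
       a * \<alpha> (fst (snd i)) + b = \<alpha> (fst (snd j)) \<and>
       a * \<alpha> (snd (snd i)) + b = \<alpha> (snd (snd j)))"
    unfolding RS_code_2 length_3
    using affine_triple_if_common_subseq3[OF assms] by fast
next
  assume "\<exists>i\<in>S3 n. \<exists>j\<in>S3 n. 2 \<le> dH3 i j \<and> (\<exists>a b. a \<noteq> 0 \<and>
       a * \<alpha> (fst i) + b = \<alpha> (fst j) \<and>
       a * \<alpha> (fst (snd i)) + b = \<alpha> (fst (snd j)) \<and>
       a * \<alpha> (snd (snd i)) + b = \<alpha> (snd (snd j)))"
  then obtain i1 i2 i3 j1 j2 j3 a b where "(i1, i2, i3) \<in> S3 n" "(j1, j2, j3) \<in> S3 n"
    "2 \<le> dH3 (i1, i2, i3) (j1, j2, j3)"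
    "a * \<alpha> i1 + b = \<alpha> j1" "a * \<alpha> i2 + b = \<alpha> j2" "a * \<alpha> i3 + b = \<alpha> j3"
    by auto
  from common_subseq3_if_affine_triple[OF assms this]
  have "affine_word \<alpha> n a b \<noteq> affine_word \<alpha> n 1 0 \<and>
    (\<exists>w. length w = 3 \<and> subseq w (affine_word \<alpha> n a b) \<and> subseq w (affine_word \<alpha> n 1 0))"
    by (metis length_Cons list.size(3) numeral_3_eq_3)
  moreover have "affine_word \<alpha> n a b \<in> RS_code \<alpha> n 2" "affine_word \<alpha> n 1 0 \<in> RS_code \<alpha> n 2"
    by (auto simp: RS_code_2)
  ultimately show "\<exists>u\<in>RS_code \<alpha> n 2. \<exists>v\<in>RS_code \<alpha> n 2. u \<noteq> v \<and>
       (\<exists>w. length w = 3 \<and> subseq w u \<and> subseq w v)"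
    by blast
qed

lemma subseq2_map_uptI:
  "1 \<le> i \<Longrightarrow> i < j \<Longrightarrow> j \<le> n \<Longrightarrow> subseq [h i, h j] (map h [1..<n+1])"
  by (intro subseq_Cons_map_uptI) auto

lemma RS2_exists_lcs_len_ge_2:
  assumes "3 \<le> n" and inj: "inj_on \<alpha> {1..n}"
  obtains u v where "u \<in> RS_code \<alpha> n 2" "v \<in> RS_code \<alpha> n 2" "u \<noteq> v" "2 \<le> lcs_len u v"
proof -
  have "\<alpha> 2 \<noteq> \<alpha> 1" using assms inj_onD[OF inj, of 2 1] by auto
  define c where "c = (\<alpha> 3 - \<alpha> 2) / (\<alpha> 2 - \<alpha> 1)"
  define d where "d = \<alpha> 2 - c * \<alpha> 1"
  have maps1: "c * \<alpha> 1 + d = \<alpha> 2" by (simp add: d_def)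
  have "c * \<alpha> 2 + d = c * (\<alpha> 2 - \<alpha> 1) + \<alpha> 2" by (simp add: d_def algebra_simps)
  also have "\<dots> = \<alpha> 3" using \<open>\<alpha> 2 \<noteq> \<alpha> 1\<close> by (simp add: c_def)
  finally have maps2: "c * \<alpha> 2 + d = \<alpha> 3" .
  have "c * \<alpha> 1 + d \<noteq> 1 * \<alpha> 1 + 0" using maps1 \<open>\<alpha> 2 \<noteq> \<alpha> 1\<close> by simp
  then have "affine_word \<alpha> n c d \<noteq> affine_word \<alpha> n 1 0"
    using assms(1) unfolding affine_word_eq_iff by fastforce
  moreover have "subseq [\<alpha> 2, \<alpha> 3] (affine_word \<alpha> n c d)"
    using subseq2_map_uptI[of 1 2 n "\<lambda>i. c * \<alpha> i + d"] assms maps1 maps2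
    by (simp add: affine_word_def del: upt_Suc)
  moreover have "subseq [\<alpha> 2, \<alpha> 3] (affine_word \<alpha> n 1 0)"
    using subseq2_map_uptI[of 2 3 n "\<lambda>i. 1 * \<alpha> i + 0"] assms
    by (simp add: affine_word_def del: upt_Suc)
  ultimately have "2 \<le> lcs_len (affine_word \<alpha> n c d) (affine_word \<alpha> n 1 0)"
    unfolding lcs_len_ge_iff by (metis length_Cons list.size(3) numeral_2_eq_2)
  moreover have "affine_word \<alpha> n c d \<in> RS_code \<alpha> n 2" "affine_word \<alpha> n 1 0 \<in> RS_code \<alpha> n 2"
    by (auto simp: RS_code_2)
  ultimately show ?thesis using \<open>affine_word \<alpha> n c d \<noteq> affine_word \<alpha> n 1 0\<close> that by blast
qed

theorem lemma4p6:
  fixes \<alpha> :: "nat \<Rightarrow> 'a::{finite, field}" and n :: nat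
  assumes "3 \<le> n" and "n \<le> card (UNIV :: 'a set)"
    and "inj_on \<alpha> {1..n}"
  shows "code_insdel_dist (RS_code \<alpha> n 2) = 2 * n - 4 \<longleftrightarrow>
    (\<forall>i\<in>S3 n. \<forall>j\<in>S3 n. dH3 i j \<ge> 2 \<longrightarrow>
       \<not> (\<exists>a b. a \<noteq> 0 \<and>
              a * \<alpha> (fst i) + b = \<alpha> (fst j) \<and>
              a * \<alpha> (fst (snd i)) + b = \<alpha> (fst (snd j)) \<and>
              a * \<alpha> (snd (snd i)) + b = \<alpha> (snd (snd j))))"
proof -
  have "finite (RS_code \<alpha> n 2)" "\<forall>w\<in>RS_code \<alpha> n 2. length w = n"
    by (auto simp: RS_code_2)
  moreover obtain u v where "u \<in> RS_code \<alpha> n 2" "v \<in> RS_code \<alpha> n 2" "u \<noteq> v" "2 \<le> lcs_len u v"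
    using RS2_exists_lcs_len_ge_2[OF assms(1,3)] .
  ultimately have "code_insdel_dist (RS_code \<alpha> n 2) = 2 * n - 4 \<longleftrightarrow>
      \<not> (\<exists>u\<in>RS_code \<alpha> n 2. \<exists>v\<in>RS_code \<alpha> n 2. u \<noteq> v \<and>
        (\<exists>w. length w = 3 \<and> subseq w u \<and> subseq w v))"
    by (rule code_insdel_dist_eq_2n_minus_4_iff)
  then show ?thesis unfolding RS2_common_subseq3_iff[OF assms(3)] by auto
qed

end
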